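(* Under the uniform random scheduler, the expected running time of Protocol 1 (2-Slot protocol) on $n$ nodes, started with one node in $L_0$ and the others in $F$, until the leader's component spans all $n$ nodes is $O(\log n)$ parallel time (i.e. $O(n\log n)$ interactions).
   Context: Network constructor model: $n$ nodes, every pair may interact; each node pair has an edge state in $\{0,1\}$, initially $0$. At each step the uniform random scheduler picks an unordered pair of nodes uniformly at random among all $n(n-1)/2$ pairs, independently of the past, and updates the pair according to the transition rules (either ordering); unlisted triples are unchanged. Parallel time is the number of steps divided by $n$. Protocol 1 (2-Slot protocol): $Q=\{F,L_0,L_1,L_2,O_0,O_1,O_2\}$, rules $(L_0,F,0)\to(L_1,O_0,1)$, $(L_1,F,0)\to(L_2,O_0,1)$, $(O_0,F,0)\to(O_1,O_0,1)$, $(O_1,F,0)\to(O_2,O_0,1)$; the node moving from $F$ to $O_0$ becomes a child of the other node, and the leader's component is the set of nodes connected to the leader by active edges. *)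

theory Defs
  imports "HOL-Probability.Probability"
begin

datatype state = F | L0 | L1 | L2 | O0 | O1 | O2

text \<open>Transition rules on an ordered triple (state of first node, state of second node,
  edge state); None means the triple is not listed (no change).\<close>
fun delta :: "state \<Rightarrow> state \<Rightarrow> bool \<Rightarrow> (state \<times> state \<times> bool) option" where
  "delta L0 F False = Some (L1, O0, True)"
| "delta L1 F False = Some (L2, O0, True)"
| "delta O0 F False = Some (O1, O0, True)"
| "delta O1 F False = Some (O2, O0, True)"
| "delta _ _ _ = None"

text \<open>A configuration: node states (nodes are 0..n-1) and the set of active edges
  (each edge is a 2-element set of nodes).\<close>
type_synonym config = "(nat \<Rightarrow> state) \<times> nat set set"

definition apply_ordered :: "nat \<Rightarrow> nat \<Rightarrow> config \<Rightarrow> config option" where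
  "apply_ordered u v c =
     (case delta (fst c u) (fst c v) ({u, v} \<in> snd c) of
        None \<Rightarrow> None
      | Some (a, b, e) \<Rightarrow>
          Some ((fst c)(u := a, v := b),
                if e then insert {u, v} (snd c) else snd c - {{u, v}}))"

definition interact :: "nat set \<Rightarrow> config \<Rightarrow> config" where
  "interact p c =
     (let u = Min p; v = Max p in
      case apply_ordered u v c of
        Some c' \<Rightarrow> c'
      | None \<Rightarrow> (case apply_ordered v u c of Some c' \<Rightarrow> c' | None \<Rightarrow> c))"

definition pairs :: "nat \<Rightarrow> nat set set" where
  "pairs n = {{u, v} | u v. u < n \<and> v < n \<and> u \<noteq> v}"

definition step :: "nat \<Rightarrow> config \<Rightarrow> config pmf" where
  "step n c = map_pmf (\<lambda>p. interact p c) (pmf_of_set (pairs n))"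

definition init :: config where
  "init = ((\<lambda>i. if i = 0 then L0 else F), {})"

definition leader_component :: "config \<Rightarrow> nat set" where
  "leader_component c = {v. (0, v) \<in> {(x, y). {x, y} \<in> snd c \<and> x \<noteq> y}\<^sup>*}"

definition spans :: "nat \<Rightarrow> config \<Rightarrow> bool" where
  "spans n c \<longleftrightarrow> leader_component c = {0..<n}"

definition stopped_step :: "nat \<Rightarrow> config \<Rightarrow> config pmf" where
  "stopped_step n c = (if spans n c then return_pmf c else step n c)"

definition stopped_chain :: "nat \<Rightarrow> nat \<Rightarrow> config pmf" where
  "stopped_chain n k = ((\<lambda>p. bind_pmf p (stopped_step n)) ^^ k) (return_pmf init)"

text \<open>Expected number of interactions T until the leader's component spans all nodes:
  E[T] = sum over k of P(T > k).\<close>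
definition expected_steps :: "nat \<Rightarrow> ennreal" where
  "expected_steps n =
     (\<Sum>k. ennreal (measure_pmf.prob (stopped_chain n k) {c. \<not> spans n c}))"

definition expected_parallel_time :: "nat \<Rightarrow> ennreal" where
  "expected_parallel_time n = expected_steps n / ennreal (real n)"

end

theory Submission
  imports Defs
begin

text \<open>Call a node active once it has left state F. Every rule activates a new node and
  attaches it to an active one, so the active nodes always form the leader's component, and
  the number of free child slots (2 for L0 and O0, 1 for L1 and O1) always equals the number
  of active nodes plus one. Hence with k active nodes at least (k+1)/2 of them have a free
  slot, and at least (k+1)(n-k)/2 of the N pairs recruit a new node. The potential
  sum over k \<le> j < n of 2N/(j(n-j)) therefore drops by at least one per step in expectation,
  which bounds the expected number of interactions by its initial value
  (4N/n) H(n-1) = O(n log n).\<close>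

text \<open>chain k is the law after k steps of the chain with kernel K stopped on hitting P, so the
  left-hand side is the expected hitting time of P by the tail-sum formula.\<close>

lemma stopped_chain_potential_bound:
  fixes K :: "'a \<Rightarrow> 'a pmf" and P I :: "'a \<Rightarrow> bool" and x0 :: 'a and V :: "'a \<Rightarrow> real"
  defines "chain k \<equiv> ((\<lambda>M. M \<bind> (\<lambda>x. if P x then return_pmf x else K x)) ^^ k) (return_pmf x0)"
  assumes inv_init: "I x0"
    and inv_step: "\<And>x y. I x \<Longrightarrow> \<not> P x \<Longrightarrow> y \<in> set_pmf (K x) \<Longrightarrow> I y"
    and V_nonneg: "\<And>x. 0 \<le> V x"
    and drift: "\<And>x. I x \<Longrightarrow> \<not> P x \<Longrightarrow> (\<integral>\<^sup>+y. V y \<partial>K x) + 1 \<le> V x"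
  shows "(\<Sum>k. ennreal (measure_pmf.prob (chain k) {x. \<not> P x})) \<le> V x0"
proof -
  define K' where "K' x = (if P x then return_pmf x else K x)" for x
  have chain_Suc: "chain (Suc k) = chain k \<bind> K'" for k
    unfolding chain_def K'_def by simp
  have inv: "I x" if "x \<in> set_pmf (chain k)" for x k
    using that
  proof (induction k arbitrary: x)
    case 0
    then show ?case using inv_init by (simp add: chain_def)
  next
    case (Suc k)
    then obtain y where "y \<in> set_pmf (chain k)" "x \<in> set_pmf (K' y)"
      by (auto simp: chain_Suc)
    then show ?case using Suc.IH inv_step by (auto simp: K'_def split: if_splits)
  qed
  have pointwise: "indicator {x. \<not> P x} x + (\<integral>\<^sup>+y. V y \<partial>K' x) \<le> V x" if "I x" for x
    using drift[OF that] V_nonneg by (auto simp: K'_def add.commute)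
  have partial: "(\<Sum>j<k. ennreal (measure_pmf.prob (chain j) {x. \<not> P x}))
      + (\<integral>\<^sup>+x. V x \<partial>chain k) \<le> V x0" for k
  proof (induction k)
    case 0
    then show ?case by (simp add: chain_def)
  next
    case (Suc k)
    have "ennreal (measure_pmf.prob (chain k) {x. \<not> P x}) + (\<integral>\<^sup>+x. V x \<partial>chain (Suc k))
        = (\<integral>\<^sup>+x. indicator {x. \<not> P x} x + (\<integral>\<^sup>+y. V y \<partial>K' x) \<partial>chain k)"
      by (simp add: chain_Suc nn_integral_add measure_pmf.emeasure_eq_measure[symmetric])
    also have "\<dots> \<le> (\<integral>\<^sup>+x. V x \<partial>chain k)"
      using pointwise inv by (intro nn_integral_mono_AE) (simp add: AE_measure_pmf_iff)
    finally have "ennreal (measure_pmf.prob (chain k) {x. \<not> P x}) + (\<integral>\<^sup>+x. V x \<partial>chain (Suc k))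
        \<le> (\<integral>\<^sup>+x. V x \<partial>chain k)" .
    then show ?case
      using Suc.IH by (simp add: add.assoc) (use add_left_mono order_trans in blast)
  qed
  show ?thesis
  proof (rule suminf_le_const[OF summableI])
    show "(\<Sum>j<k. ennreal (measure_pmf.prob (chain j) {x. \<not> P x})) \<le> V x0" for k
      using partial[of k] by (rule order_trans[rotated]) simp
  qed
qed

lemma harm_le_one_plus_ln: "0 < n \<Longrightarrow> harm n \<le> 1 + ln (real n)"
  using euler_mascheroni_sequence_decreasing[of 1 n] by (simp add: harm_expand)

lemma sum_inverse_mult_complement:
  "(\<Sum>j\<in>{1..<n}. 1 / real (j * (n - j))) = 2 * harm (n - 1) / real n"
proof -
  have harm: "(\<Sum>j\<in>{1..<n}. 1 / real j) = harm (n - 1)"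
    by (cases n) (simp_all add: harm_def atLeastLessThanSuc_atLeastAtMost inverse_eq_divide)
  have "(\<Sum>j\<in>{1..<n}. 1 / real (n - j)) = (\<Sum>j\<in>{1..<n}. 1 / real (n - (n + 1 - Suc j)))"
    by (rule sum.atLeastLessThan_rev)
  also have "\<dots> = (\<Sum>j\<in>{1..<n}. 1 / real j)"
    by (intro sum.cong) auto
  finally have reflect: "(\<Sum>j\<in>{1..<n}. 1 / real (n - j)) = harm (n - 1)"
    using harm by simp
  have "(\<Sum>j\<in>{1..<n}. 1 / real (j * (n - j)))
      = (\<Sum>j\<in>{1..<n}. (1 / real j + 1 / real (n - j)) / real n)"
    by (intro sum.cong) (auto simp: field_simps)
  also have "\<dots> = 2 * harm (n - 1) / real n"
    unfolding sum_divide_distrib[symmetric] sum.distrib harm reflect by simp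
  finally show ?thesis .
qed

lemma finite_pairs: "finite (pairs n)"
proof -
  have "pairs n \<subseteq> Pow {0..<n}" by (auto simp: pairs_def)
  then show ?thesis by (rule finite_subset) simp
qed

lemma pairs_nonempty:
  assumes "2 \<le> n"
  shows "pairs n \<noteq> {}"
proof -
  have "{0, 1} \<in> pairs n"
    using assms unfolding pairs_def by force
  then show ?thesis by blast
qed

lemma card_pairs_le: "card (pairs n) \<le> n * n"
proof -
  have "pairs n \<subseteq> (\<lambda>(u, v). {u, v}) ` ({0..<n} \<times> {0..<n})"
    by (auto simp: pairs_def)
  then have "card (pairs n) \<le> card ((\<lambda>(u, v). {u, v}) ` ({0..<n} \<times> {0..<n}))"
    by (intro card_mono) simp_all
  also have "\<dots> \<le> n * n"
    using card_image_le[of "{0..<n} \<times> {0..<n}" "\<lambda>(u, v). {u, v}"] by simp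
  finally show ?thesis .
qed

fun slots :: "state \<Rightarrow> nat" where
  "slots L0 = 2" | "slots L1 = 1" | "slots O0 = 2" | "slots O1 = 1" | "slots _ = 0"

lemma slots_le_two: "slots s \<le> 2"
  by (cases s) simp_all

definition active :: "nat \<Rightarrow> config \<Rightarrow> nat set" where
  "active n c = {i. i < n \<and> fst c i \<noteq> F}"

lemma active_subset: "active n c \<subseteq> {0..<n}"
  by (auto simp: active_def)

lemma finite_active [simp]: "finite (active n c)"
  using active_subset finite_subset by blast

definition edge_rel :: "config \<Rightarrow> (nat \<times> nat) set" where
  "edge_rel c = {(x, y). {x, y} \<in> snd c \<and> x \<noteq> y}"

definition two_slot_inv :: "nat \<Rightarrow> config \<Rightarrow> bool" where
  "two_slot_inv n c \<longleftrightarrow> 0 \<in> active n c \<and>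
     (\<forall>e\<in>snd c. \<exists>x\<in>active n c. \<exists>y\<in>active n c. x \<noteq> y \<and> e = {x, y}) \<and>
     (\<forall>v\<in>active n c. (0, v) \<in> (edge_rel c)\<^sup>*) \<and>
     (\<Sum>i\<in>active n c. slots (fst c i)) = card (active n c) + 1"

lemma delta_SomeD:
  assumes "delta x y z = Some (a, b, e)"
  shows "x \<noteq> F \<and> y = F \<and> \<not> z \<and> a \<noteq> F \<and> b = O0 \<and> e \<and> slots x = Suc (slots a)"
  using assms by (cases x; cases y; cases z) auto

lemma delta_slots_F: "0 < slots x \<Longrightarrow> \<exists>a. delta x F False = Some (a, O0, True)"
  by (cases x) auto

lemma delta_F [simp]: "delta F y z = None"
  by (cases y; cases z) auto

lemma apply_ordered_SomeD:
  assumes "apply_ordered u v c = Some c'"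
  obtains a where "fst c u \<noteq> F" "fst c v = F" "{u, v} \<notin> snd c" "a \<noteq> F"
    "slots (fst c u) = Suc (slots a)" "c' = ((fst c)(u := a, v := O0), insert {u, v} (snd c))"
proof -
  obtain a b e where d: "delta (fst c u) (fst c v) ({u, v} \<in> snd c) = Some (a, b, e)"
    and c': "c' = ((fst c)(u := a, v := b), if e then insert {u, v} (snd c) else snd c - {{u, v}})"
    using assms by (auto simp: apply_ordered_def split: option.splits)
  show thesis using delta_SomeD[OF d] c' that by auto
qed

lemma interact_doubleton:
  assumes "u \<noteq> v"
  shows "interact {u, v} c = (case apply_ordered u v c of Some c' \<Rightarrow> c'
           | None \<Rightarrow> (case apply_ordered v u c of Some c' \<Rightarrow> c' | None \<Rightarrow> c))"
proof (cases "u < v")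
  case True
  then show ?thesis by (simp add: interact_def)
next
  case False
  \<comment> \<open>a rule needs exactly one node in state F, so at most one ordering of the pair applies\<close>
  have "apply_ordered u v c = None \<or> apply_ordered v u c = None"
    by (metis apply_ordered_SomeD not_None_eq)
  then show ?thesis
    using False assms by (auto simp: interact_def insert_commute split: option.splits)
qed

lemma two_slot_inv_apply_ordered:
  assumes inv: "two_slot_inv n c" and "u < n" "v < n"
    and ao: "apply_ordered u v c = Some c'"
  shows "two_slot_inv n c' \<and> active n c' = insert v (active n c) \<and> v \<notin> active n c"
proof -
  obtain a where u: "fst c u \<noteq> F" and v: "fst c v = F" and "{u, v} \<notin> snd c" "a \<noteq> F"
    and slots_u: "slots (fst c u) = Suc (slots a)"
    and c': "c' = ((fst c)(u := a, v := O0), insert {u, v} (snd c))"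
    using apply_ordered_SomeD[OF ao] by blast
  have uv: "u \<noteq> v" "u \<in> active n c" "v \<notin> active n c"
    using u v \<open>u < n\<close> by (auto simp: active_def)
  have active': "active n c' = insert v (active n c)"
    using \<open>a \<noteq> F\<close> \<open>v < n\<close> uv by (auto simp: active_def c')
  have states': "fst c' = (fst c)(u := a, v := O0)"
    by (simp add: c')
  have "edge_rel c \<subseteq> edge_rel c'" "(u, v) \<in> edge_rel c'"
    using uv by (auto simp: edge_rel_def c')
  then have reach: "(0, w) \<in> (edge_rel c')\<^sup>*" if "(0, w) \<in> (edge_rel c)\<^sup>*" for w
    using that rtrancl_mono by blast
  have "(0, u) \<in> (edge_rel c')\<^sup>*"
    using reach inv uv by (simp add: two_slot_inv_def)
  then have "(0, v) \<in> (edge_rel c')\<^sup>*"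
    using \<open>(u, v) \<in> edge_rel c'\<close> by (rule rtrancl_into_rtrancl)
  then have connected: "\<forall>w\<in>active n c'. (0, w) \<in> (edge_rel c')\<^sup>*"
    using inv reach by (auto simp: two_slot_inv_def active')
  have edges: "\<forall>e\<in>snd c'. \<exists>x\<in>active n c'. \<exists>y\<in>active n c'. x \<noteq> y \<and> e = {x, y}"
    using inv uv unfolding two_slot_inv_def active' by (simp add: c') blast
  have "(\<Sum>i\<in>active n c'. slots (fst c' i))
      = slots O0 + slots a + (\<Sum>i\<in>active n c - {u}. slots (fst c i))"
    using uv by (simp add: active' states' sum.remove) (intro sum.cong; auto)
  also have "\<dots> = Suc (\<Sum>i\<in>active n c. slots (fst c i))"
    using uv slots_u by (simp add: sum.remove)
  finally have "(\<Sum>i\<in>active n c'. slots (fst c' i)) = card (active n c') + 1"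
    using inv uv by (simp add: two_slot_inv_def active')
  then show ?thesis
    using inv connected edges uv by (simp add: two_slot_inv_def active')
qed

lemma two_slot_inv_interact:
  assumes inv: "two_slot_inv n c" and p: "p \<in> pairs n"
  shows "two_slot_inv n (interact p c) \<and> active n c \<subseteq> active n (interact p c)"
proof -
  obtain u v where uv: "p = {u, v}" "u < n" "v < n" "u \<noteq> v"
    using p unfolding pairs_def by blast
  have "interact p c = c \<or> apply_ordered u v c = Some (interact p c)
      \<or> apply_ordered v u c = Some (interact p c)"
    by (auto simp: uv(1) interact_doubleton[OF uv(4)] split: option.splits)
  then show ?thesis
    using inv two_slot_inv_apply_ordered[OF inv uv(2,3)] two_slot_inv_apply_ordered[OF inv uv(3,2)]
    by (elim disjE) auto
qed

lemma active_interact_recruit: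
  assumes inv: "two_slot_inv n c" and u: "u \<in> active n c" "0 < slots (fst c u)"
    and v: "v < n" "v \<notin> active n c"
  shows "active n (interact {u, v} c) = insert v (active n c)"
proof -
  have "u < n" "fst c v = F" using u v by (auto simp: active_def)
  have "{u, v} \<notin> snd c"
    using inv v(2) by (auto simp: two_slot_inv_def doubleton_eq_iff)
  then obtain c' where c': "apply_ordered u v c = Some c'"
    using delta_slots_F[OF u(2)] \<open>fst c v = F\<close> by (auto simp: apply_ordered_def)
  moreover have "apply_ordered v u c = None"
    using \<open>fst c v = F\<close> by (simp add: apply_ordered_def)
  moreover have "u \<noteq> v" using u v by blast
  ultimately show ?thesis
    using two_slot_inv_apply_ordered[OF inv \<open>u < n\<close> v(1) c'] by (simp add: interact_doubleton)
qed

lemma leader_component_eq_active: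
  assumes inv: "two_slot_inv n c"
  shows "leader_component c = active n c"
proof -
  have "v \<in> active n c" if "(0, v) \<in> (edge_rel c)\<^sup>*" for v
    using that
  proof (induction rule: rtrancl_induct)
    case base
    then show ?case using inv by (simp add: two_slot_inv_def)
  next
    case (step y z)
    then show ?case using inv by (auto simp: two_slot_inv_def edge_rel_def doubleton_eq_iff)
  qed
  then show ?thesis
    using inv by (auto simp: leader_component_def two_slot_inv_def edge_rel_def[symmetric])
qed

lemma spans_iff_card_active:
  assumes "two_slot_inv n c"
  shows "spans n c \<longleftrightarrow> card (active n c) = n"
proof -
  have "card (active n c) = n \<Longrightarrow> active n c = {0..<n}"
    using card_subset_eq[OF finite_atLeastLessThan active_subset] by simp
  then show ?thesis
    by (auto simp: spans_def leader_component_eq_active[OF assms])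
qed

lemma two_slot_inv_init: "0 < n \<Longrightarrow> two_slot_inv n init"
proof -
  assume "0 < n"
  then have "active n init = {0}" by (auto simp: active_def init_def)
  then show ?thesis by (simp add: two_slot_inv_def init_def)
qed

text \<open>With j active nodes at least j(n-j)/2 of the pairs recruit a new node, so the weight of
  level j dominates the reciprocal of the probability of leaving it.\<close>

definition potential_weight :: "nat \<Rightarrow> nat \<Rightarrow> real" where
  "potential_weight n j = 2 * real (card (pairs n)) / real (j * (n - j))"

definition potential_level :: "nat \<Rightarrow> nat \<Rightarrow> real" where
  "potential_level n k = (\<Sum>j\<in>{k..<n}. potential_weight n j)"

definition potential :: "nat \<Rightarrow> config \<Rightarrow> real" where
  "potential n c = potential_level n (card (active n c))"

lemma potential_weight_nonneg: "0 \<le> potential_weight n j"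
  unfolding potential_weight_def by (intro divide_nonneg_nonneg) simp_all

lemma potential_nonneg: "0 \<le> potential n c"
  unfolding potential_def potential_level_def by (intro sum_nonneg potential_weight_nonneg)

lemma potential_level_antimono: "k \<le> k' \<Longrightarrow> potential_level n k' \<le> potential_level n k"
  unfolding potential_level_def by (intro sum_mono2) (auto simp: potential_weight_nonneg)

lemma potential_level_Suc:
  "k < n \<Longrightarrow> potential_level n (Suc k) = potential_level n k - potential_weight n k"
  by (simp add: potential_level_def sum.atLeast_Suc_lessThan)

definition recruiting_pairs :: "nat \<Rightarrow> config \<Rightarrow> nat set set" where
  "recruiting_pairs n c =
     (\<lambda>(u, v). {u, v}) ` ({u \<in> active n c. 0 < slots (fst c u)} \<times> ({0..<n} - active n c))"

lemma recruiting_pairs_subset: "recruiting_pairs n c \<subseteq> pairs n"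
proof
  fix p assume "p \<in> recruiting_pairs n c"
  then obtain u v where "p = {u, v}" "u \<in> active n c" "v < n" "v \<notin> active n c"
    by (auto simp: recruiting_pairs_def)
  moreover have "u < n" using \<open>u \<in> active n c\<close> by (simp add: active_def)
  ultimately show "p \<in> pairs n"
    unfolding pairs_def by blast
qed

lemma card_recruiting_pairs:
  assumes inv: "two_slot_inv n c"
  shows "card (active n c) * (n - card (active n c)) \<le> 2 * card (recruiting_pairs n c)"
proof -
  define S where "S = {u \<in> active n c. 0 < slots (fst c u)}"
  have "inj_on (\<lambda>(u, v). {u, v}) (S \<times> ({0..<n} - active n c))"
    by (rule inj_onI) (auto simp: S_def doubleton_eq_iff)
  then have "card (recruiting_pairs n c) = card S * (n - card (active n c))"
    using active_subset
    by (simp add: recruiting_pairs_def S_def[symmetric] card_image card_cartesian_product card_Diff_subset)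
  moreover have "card (active n c) + 1 \<le> 2 * card S"
  proof -
    have "card (active n c) + 1 = (\<Sum>i\<in>active n c. slots (fst c i))"
      using inv by (simp add: two_slot_inv_def)
    also have "\<dots> = (\<Sum>i\<in>S. slots (fst c i))"
      by (rule sum.mono_neutral_right) (auto simp: S_def)
    also have "\<dots> \<le> (\<Sum>i\<in>S. 2)"
      by (intro sum_mono slots_le_two)
    finally show ?thesis by simp
  qed
  ultimately show ?thesis
    using mult_le_mono1[of "card (active n c)" "2 * card S" "n - card (active n c)"] by simp
qed

lemma card_active_interact_recruiting:
  assumes inv: "two_slot_inv n c" and p: "p \<in> recruiting_pairs n c"
  shows "card (active n (interact p c)) = Suc (card (active n c))"
proof -
  obtain u v where "p = {u, v}" "u \<in> active n c" "0 < slots (fst c u)" "v < n" "v \<notin> active n c"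
    using p by (auto simp: recruiting_pairs_def)
  then show ?thesis
    using active_interact_recruit[OF inv] by simp
qed

lemma card_active_lt:
  assumes inv: "two_slot_inv n c" and "\<not> spans n c"
  shows "0 < card (active n c)" "card (active n c) < n"
proof -
  show "0 < card (active n c)"
    using inv by (auto simp: two_slot_inv_def card_gt_0_iff)
  have "card (active n c) \<le> n"
    using card_mono[OF _ active_subset] by simp
  then show "card (active n c) < n"
    using assms spans_iff_card_active by fastforce
qed

lemma potential_interact_sum:
  assumes inv: "two_slot_inv n c" and not_spans: "\<not> spans n c"
  shows "(\<Sum>p\<in>pairs n. potential n (interact p c)) + card (pairs n)
      \<le> card (pairs n) * potential n c"
proof -
  define k where "k = card (active n c)"
  define R where "R = recruiting_pairs n c"
  define w where "w = potential_weight n k"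
  have k: "0 < k" "k < n"
    using card_active_lt[OF assms] by (simp_all add: k_def)
  have next_le: "potential n (interact p c) \<le> potential n c - (if p \<in> R then w else 0)"
    if "p \<in> pairs n" for p
  proof (cases "p \<in> R")
    case True
    then show ?thesis
      using card_active_interact_recruiting[OF inv] potential_level_Suc[OF k(2)]
      by (simp add: potential_def R_def w_def k_def)
  next
    case False
    have "k \<le> card (active n (interact p c))"
      using two_slot_inv_interact[OF inv that] by (simp add: k_def card_mono)
    then show ?thesis
      using False potential_level_antimono by (simp add: potential_def k_def)
  qed
  have gain: "card (pairs n) \<le> card R * w"
  proof -
    define D where "D = real (k * (n - k))"
    have pos: "0 < D" using k by (simp add: D_def)
    have w: "w = 2 * real (card (pairs n)) / D"
      unfolding w_def potential_weight_def D_def ..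
    have "D \<le> real (2 * card R)"
      using card_recruiting_pairs[OF inv] unfolding D_def R_def k_def of_nat_le_iff .
    then have "card (pairs n) \<le> card (pairs n) * (2 * card R) / D"
      using pos by (simp add: le_divide_eq mult_left_mono)
    then show ?thesis by (simp add: w algebra_simps)
  qed
  have "(\<Sum>p\<in>pairs n. potential n (interact p c))
      \<le> (\<Sum>p\<in>pairs n. potential n c - (if p \<in> R then w else 0))"
    by (intro sum_mono next_le)
  also have "\<dots> = card (pairs n) * potential n c - card R * w"
    using recruiting_pairs_subset[of n c] finite_pairs[of n]
    by (simp add: R_def sum_subtractf sum.If_cases Int_absorb1)
  finally show ?thesis using gain by linarith
qed

lemma nn_integral_step:
  assumes "2 \<le> n"
  shows "(\<integral>\<^sup>+d. f d \<partial>step n c) = (\<Sum>p\<in>pairs n. f (interact p c)) / card (pairs n)"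
  using nn_integral_pmf_of_set[OF pairs_nonempty[OF assms] finite_pairs] by (simp add: step_def)

lemma set_pmf_step: "2 \<le> n \<Longrightarrow> set_pmf (step n c) = (\<lambda>p. interact p c) ` pairs n"
  by (simp add: step_def pairs_nonempty finite_pairs)

lemma potential_drift:
  assumes n: "2 \<le> n" and inv: "two_slot_inv n c" and not_spans: "\<not> spans n c"
  shows "(\<integral>\<^sup>+d. ennreal (potential n d) \<partial>step n c) + 1 \<le> ennreal (potential n c)"
proof -
  define N where "N = real (card (pairs n))"
  define S where "S = (\<Sum>p\<in>pairs n. potential n (interact p c))"
  have N: "0 < N"
    using pairs_nonempty[OF n] finite_pairs by (simp add: N_def card_gt_0_iff)
  have S: "0 \<le> S"
    by (simp add: S_def sum_nonneg potential_nonneg)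
  have "(\<integral>\<^sup>+d. ennreal (potential n d) \<partial>step n c) = ennreal S / ennreal N"
    by (simp add: nn_integral_step[OF n] S_def N_def potential_nonneg ennreal_of_nat_eq_real_of_nat)
  also have "\<dots> = ennreal (S / N)"
    using N S by (simp add: divide_ennreal)
  finally have "(\<integral>\<^sup>+d. ennreal (potential n d) \<partial>step n c) + 1 = ennreal (S / N + 1)"
    using N S by (simp add: ennreal_plus)
  also have "S / N + 1 \<le> potential n c"
    using potential_interact_sum[OF inv not_spans] N by (simp add: S_def N_def field_simps)
  finally show ?thesis by (simp add: ennreal_leI)
qed

lemma expected_steps_le_potential:
  assumes n: "2 \<le> n"
  shows "expected_steps n \<le> ennreal (potential n init)"
  unfolding expected_steps_def stopped_chain_def stopped_step_def
proof (rule stopped_chain_potential_bound[where I = "two_slot_inv n"])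
  show "two_slot_inv n init"
    using n by (simp add: two_slot_inv_init)
  show "two_slot_inv n y" if "two_slot_inv n x" "y \<in> set_pmf (step n x)" for x y
    using that two_slot_inv_interact[OF that(1)] by (auto simp: set_pmf_step[OF n])
qed (use n potential_nonneg potential_drift in auto)

lemma potential_init_le:
  assumes n: "3 \<le> n"
  shows "potential n init \<le> 8 * real n * ln (real n)"
proof -
  have "active n init = {0}"
    using n by (auto simp: active_def init_def)
  then have "potential n init = (\<Sum>j\<in>{1..<n}. 2 * real (card (pairs n)) * (1 / real (j * (n - j))))"
    by (simp add: potential_def potential_level_def potential_weight_def)
  also have "\<dots> = 2 * real (card (pairs n)) * (2 * harm (n - 1) / real n)"
    unfolding sum_distrib_left[symmetric] sum_inverse_mult_complement ..
  also have "\<dots> = 4 * real (card (pairs n)) / real n * harm (n - 1)"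
    by simp
  also have "\<dots> \<le> 4 * real n * (1 + ln (real n))"
  proof (rule mult_mono)
    show "4 * real (card (pairs n)) / real n \<le> 4 * real n"
      using card_pairs_le[of n] n by (simp add: divide_le_eq flip: of_nat_mult)
    show "harm (n - 1) \<le> 1 + ln (real n)"
      using n by (intro order_trans[OF harm_mono harm_le_one_plus_ln]) simp_all
  qed (simp_all add: harm_nonneg)
  also have "\<dots> \<le> 8 * real n * ln (real n)"
  proof -
    have "exp 1 \<le> real n" using exp_le n by linarith
    then have "1 \<le> ln (real n)" using n by (subst ln_ge_iff) auto
    then show ?thesis using n by (simp add: algebra_simps)
  qed
  finally show ?thesis .
qed

theorem theorem6:
  shows "\<exists>C N0. \<forall>n\<ge>N0. expected_parallel_time n \<le> ennreal (C * ln (real n))"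
proof (intro exI[of _ "8 :: real"] exI[of _ "3 :: nat"] allI impI)
  fix n :: nat
  assume n: "3 \<le> n"
  have "expected_steps n \<le> ennreal (potential n init)"
    using n by (intro expected_steps_le_potential) simp
  also have "\<dots> \<le> ennreal (8 * real n * ln (real n))"
    using potential_init_le[OF n] by (rule ennreal_leI)
  finally have "expected_steps n \<le> ennreal (8 * real n * ln (real n))" .
  then have "expected_parallel_time n \<le> ennreal (8 * real n * ln (real n)) / ennreal (real n)"
    unfolding expected_parallel_time_def by (rule divide_right_mono_ennreal)
  also have "\<dots> = ennreal (8 * real n * ln (real n) / real n)"
    using n by (intro divide_ennreal) auto
  also have "\<dots> = ennreal (8 * ln (real n))"
    using n by simp
  finally show "expected_parallel_time n \<le> ennreal (8 * ln (real n))" .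
qed

end
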